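(* Assume the setup of the context, in particular $N_j=\tilde N-n_j$. Let \[ D_1(N)=s_0^{2N-1}\prod_{p\mid s_0}p^{\nu_p(N-1)}\times\prod_{j=1}^m\Big\{\prod_{p\mid v_j}p^{\nu_p(n_j)}\prod_{p\nmid s_j}p^{M_p(r_j+(n_0+1)s_j)}\Big\}, \] \[ D_2(N)=\Big(\frac{d}{(d,s_0)}\Big)^{\tilde N}\prod_{p\mid s}p^{\nu_p(\tilde N)}\times\prod_p p^{M_p(U+V\tilde N)}, \] (products over primes $p$) and $D(N)=D_1(N)D_2(N)$. Then $D(N)Q_i(z)\in\mathbb{Z}[z]$ and $D(N)P_{ij}(z)\in\mathbb{Z}[z]$ for all $i=0,1,\dots,m$, $j=1,\dots,m$.
   Context: Let $m\ge1$ and let $\alpha_0,\alpha_1,\dots,\alpha_m$ be positive rational numbers with $\alpha_i-\alpha_j\notin\mathbb{Z}$ for $1\le i<j\le m$. Pochhammer symbol: $(x)_0=1$, $(x)_n=x(x+1)\cdots(x+n-1)$. Let $\varphi_j(z)=\sum_{n\ge0}\frac{(\alpha_j)_n}{(\alpha_j+\alpha_0)_n}z^n$. Write $\alpha_j=r_j/s_j$ ($j=0,\dots,m$) and $\alpha_j+\alpha_0=u_j/v_j$ ($j=1,\dots,m$) with positive integers, $\gcd(r_j,s_j)=\gcd(u_j,v_j)=1$; $R=\max_{1\le j\le m} r_j$, $S=\max s_j$, $U=\max u_j$, $V=\max v_j$; $d_j$ is the positive integer with $s_0s_j=d_jv_j$; $s,v,d$ are the least common multiples of $s_j$, $v_j$,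 $d_j$ ($j=1,\dots,m$) respectively; $\tilde d=d/\gcd(d,s_0)$. For $x>0$ and a prime $p$, $M_p(x)=\lfloor \log x/\log p\rfloor$ (so $p^{M_p(x)}=1$ for $p>x$), and $\nu_p(n)=\sum_{t\ge1}\lfloor n/p^t\rfloor$. Padé setup: let $n_1,\dots,n_m$ be positive integers, $N=n_1+\cdots+n_m$, $n_0\ge\max\{n_1,\dots,n_m\}$ an integer, $\tilde N=N+n_0$, and $N_j=\tilde N-n_j$. For $i=0,\dots,m$ and $\delta_{ij}$ the Kronecker delta, $Q_i(z)=\sum_{k=0}^Na_{ik}z^k$ with $a_{iN}=1$ and for $k=0,\dots,N-1$ \[ a_{i,N-k-1}=\sum_{\ell=k}^{N-1}(-1)^{\ell+1}\frac{(\alpha_0-1)_{\ell-k}}{(\ell-k)!}\frac{(\alpha_0+\ell+1)_{N-\ell-1}}{(N-\ell-1)!}\prod_{j=1}^m\frac{(\alpha_j+\alpha_0+n_0-n_j+\delta_{ij}+\ell+1)_{n_j}}{(\alpha_j+n_0-n_j+\delta_{ij}+1)_{n_j}}, \] and $P_{ij}(z)=\sum_{\mu=0}^{N_j+\delta_{ij}}c_{ij\mu}z^\mu$, $c_{ij\mu}=\sum_{k=0}^{\min\{N,\mu\}}a_{ik}\frac{(\alpha_j)_{\mu-k}}{(\alpha_j+\alpha_0)_{\mu-k}}$. *)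

theory Defs
  imports Complex_Main "HOL-Computational_Algebra.Primes"
begin

definition numr :: "rat \<Rightarrow> nat" where
  "numr q = nat (fst (quotient_of q))"
definition denr :: "rat \<Rightarrow> nat" where
  "denr q = nat (snd (quotient_of q))"

text \<open>Legendre's nu_p(n) = sum_{t>=1} floor(n/p^t); terms with t > n vanish for p >= 2.\<close>
definition nu :: "nat \<Rightarrow> nat \<Rightarrow> nat" where
  "nu p n = (\<Sum>t\<in>{1..n}. n div p ^ t)"

definition Mp :: "nat \<Rightarrow> nat \<Rightarrow> nat" where
  "Mp p x = nat \<lfloor>ln (real x) / ln (real p)\<rfloor>"

definition NN :: "nat \<Rightarrow> (nat \<Rightarrow> nat) \<Rightarrow> nat" where
  "NN m n = (\<Sum>j=1..m. n j)"

definition Ntil :: "nat \<Rightarrow> (nat \<Rightarrow> nat) \<Rightarrow> nat" where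
  "Ntil m n = NN m n + n 0"

definition kdelta :: "nat \<Rightarrow> nat \<Rightarrow> rat" where
  "kdelta i j = (if i = j then 1 else 0)"

text \<open>Coefficient a_{ik} of Q_i (zero outside 0..N).\<close>
definition acoef :: "nat \<Rightarrow> (nat \<Rightarrow> rat) \<Rightarrow> (nat \<Rightarrow> nat) \<Rightarrow> nat \<Rightarrow> nat \<Rightarrow> rat" where
  "acoef m \<alpha> n i k =
    (let N = NN m n in
     if k = N then 1
     else if k < N then
       (let kk = N - k - 1 in
        \<Sum>l=kk..N-1. (-1) ^ (l + 1)
          * (pochhammer (\<alpha> 0 - 1) (l - kk) / fact (l - kk))
          * (pochhammer (\<alpha> 0 + of_nat l + 1) (N - l - 1) / fact (N - l - 1))
          * (\<Prod>j=1..m.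
              pochhammer (\<alpha> j + \<alpha> 0 + of_nat (n 0) - of_nat (n j) + kdelta i j + of_nat l + 1) (n j)
              / pochhammer (\<alpha> j + of_nat (n 0) - of_nat (n j) + kdelta i j + 1) (n j)))
     else 0)"

text \<open>Coefficient c_{ij mu} of P_{ij}.\<close>
definition ccoef :: "nat \<Rightarrow> (nat \<Rightarrow> rat) \<Rightarrow> (nat \<Rightarrow> nat) \<Rightarrow> nat \<Rightarrow> nat \<Rightarrow> nat \<Rightarrow> rat" where
  "ccoef m \<alpha> n i j \<mu> =
    (\<Sum>k=0..min (NN m n) \<mu>. acoef m \<alpha> n i k
        * pochhammer (\<alpha> j) (\<mu> - k) / pochhammer (\<alpha> j + \<alpha> 0) (\<mu> - k))"

definition dj :: "(nat \<Rightarrow> rat) \<Rightarrow> nat \<Rightarrow> nat" where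
  "dj \<alpha> j = denr (\<alpha> 0) * denr (\<alpha> j) div denr (\<alpha> j + \<alpha> 0)"

definition D1 :: "nat \<Rightarrow> (nat \<Rightarrow> rat) \<Rightarrow> (nat \<Rightarrow> nat) \<Rightarrow> nat" where
  "D1 m \<alpha> n =
    (let N = NN m n; s0 = denr (\<alpha> 0) in
     s0 ^ (2 * N - 1) * (\<Prod>p\<in>prime_factors s0. p ^ nu p (N - 1))
     * (\<Prod>j=1..m.
          (\<Prod>p\<in>prime_factors (denr (\<alpha> j + \<alpha> 0)). p ^ nu p (n j))
        * (let x = numr (\<alpha> j) + (n 0 + 1) * denr (\<alpha> j) in
           \<Prod>p\<in>{p. prime p \<and> \<not> p dvd denr (\<alpha> j) \<and> p \<le> x}. p ^ Mp p x)))"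

definition D2 :: "nat \<Rightarrow> (nat \<Rightarrow> rat) \<Rightarrow> (nat \<Rightarrow> nat) \<Rightarrow> nat" where
  "D2 m \<alpha> n =
    (let Nt = Ntil m n; s0 = denr (\<alpha> 0);
         s = Lcm ((\<lambda>j. denr (\<alpha> j)) ` {1..m});
         d = Lcm ((\<lambda>j. dj \<alpha> j) ` {1..m});
         U = Max ((\<lambda>j. numr (\<alpha> j + \<alpha> 0)) ` {1..m});
         V = Max ((\<lambda>j. denr (\<alpha> j + \<alpha> 0)) ` {1..m});
         x = U + V * Nt in
     (d div gcd d s0) ^ Nt * (\<Prod>p\<in>prime_factors s. p ^ nu p Nt)
     * (\<Prod>p\<in>{p. prime p \<and> p \<le> x}. p ^ Mp p x))"

definition DD :: "nat \<Rightarrow> (nat \<Rightarrow> rat) \<Rightarrow> (nat \<Rightarrow> nat) \<Rightarrow> nat" where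
  "DD m \<alpha> n = D1 m \<alpha> n * D2 m \<alpha> n"

end

theory Submission
  imports Defs "HOL-Number_Theory.Cong"
begin

text \<open>
  All coefficients are sums of products of Pochhammer quotients whose arguments are rationals
  with a fixed denominator s, and (a/s)_b = s^(-b) \<Prod>_{t<b} (a + t s) is a product over an
  arithmetic progression. If p does not divide the step s, exactly \<lfloor>b/p^e\<rfloor> or \<lfloor>b/p^e\<rfloor> + 1 of
  b consecutive terms are divisible by p^e, and none once p^e exceeds all of them. Hence the
  p-adic valuation of such a product is at least \<nu>_p(b), which bounds that of b!, and, if the terms
  lie in (0, x], at most \<nu>_p(b) + M_p(x). The factors s^b \<Prod>_{p|s} p^\<nu>_p(b) and \<Prod>_p p^M_p(x)
  of D(N) compensate precisely these defects: D_1 clears the denominators of the a_ik, and D_2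
  those of the quotients (\<alpha>_j)_L / (\<alpha>_j + \<alpha>_0)_L entering the c_ij\<mu>.
\<close>

section \<open>p-adic valuations via counting\<close>

lemma multiplicity_eq_card_dvd_powers:
  fixes p m :: int
  assumes "m \<noteq> 0" "prime p" "multiplicity p m \<le> K"
  shows "multiplicity p m = card {e\<in>{1..K}. p ^ e dvd m}"
proof -
  have dvd_iff: "p ^ e dvd m \<longleftrightarrow> e \<le> multiplicity p m" for e
    using assms(1) prime_elem_not_unit[OF prime_imp_prime_elem[OF assms(2)]]
    by (rule power_dvd_iff_le_multiplicity)
  have "{e\<in>{1..K}. p ^ e dvd m} = {1..multiplicity p m}"
    unfolding dvd_iff using assms(3) by auto
  thus ?thesis by simp
qed

lemma multiplicity_prod_eq_sum_card:
  fixes f :: "nat \<Rightarrow> int" and p :: int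
  assumes "prime p" "\<And>t. t < n \<Longrightarrow> f t \<noteq> 0"
  obtains K where "n \<le> K"
    "multiplicity p (\<Prod>t<n. f t) = (\<Sum>e\<in>{1..K}. card {t. t < n \<and> p ^ e dvd f t})"
proof
  define K where "K = n + (\<Sum>t<n. multiplicity p (f t))"
  show "n \<le> K" by (simp add: K_def)
  have bound: "multiplicity p (f t) \<le> K" if "t < n" for t
    using member_le_sum[of t "{..<n}" "\<lambda>t. multiplicity p (f t)"] that by (simp add: K_def)
  have "multiplicity p (\<Prod>t<n. f t) = (\<Sum>t<n. multiplicity p (f t))"
    using assms by (intro prime_elem_multiplicity_prod_distrib) auto
  also have "\<dots> = (\<Sum>t<n. card {e\<in>{1..K}. p ^ e dvd f t})"
    using assms bound by (intro sum.cong refl multiplicity_eq_card_dvd_powers) auto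
  also have "\<dots> = (\<Sum>t<n. \<Sum>e\<in>{1..K}. of_bool (p ^ e dvd f t))"
    by (intro sum.cong) (auto simp: Int_def)
  also have "\<dots> = (\<Sum>e\<in>{1..K}. \<Sum>t<n. of_bool (p ^ e dvd f t))"
    by (rule sum.swap)
  also have "\<dots> = (\<Sum>e\<in>{1..K}. card {t. t < n \<and> p ^ e dvd f t})"
    by (intro sum.cong) (auto simp: Int_def lessThan_def)
  finally show "multiplicity p (\<Prod>t<n. f t)
      = (\<Sum>e\<in>{1..K}. card {t. t < n \<and> p ^ e dvd f t})" .
qed

lemma multiplicity_of_nat:
  fixes p n :: nat
  assumes "prime p"
  shows "multiplicity (int p) (int n) = multiplicity p n"
proof (cases "n = 0")
  case False
  have "\<not> is_unit p" "\<not> is_unit (int p)"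
    using assms prime_nat_int_transfer not_prime_unit by blast+
  moreover have "int p ^ k dvd int n \<longleftrightarrow> p ^ k dvd n" for k
    by (metis of_nat_dvd_iff of_nat_power)
  ultimately have "k \<le> multiplicity (int p) (int n) \<longleftrightarrow> k \<le> multiplicity p n" for k
    using False by (simp add: power_dvd_iff_le_multiplicity[symmetric])
  thus ?thesis by (meson le_antisym order_refl)
qed simp

lemma multiplicity_prod_prime_powers_of_nat:
  fixes p :: nat
  assumes "finite S" "\<And>q. q \<in> S \<Longrightarrow> prime q" "prime p"
  shows "multiplicity (int p) (int (\<Prod>q\<in>S. q ^ f q)) = (if p \<in> S then f p else 0)"
  unfolding multiplicity_of_nat[OF assms(3)] by (rule multiplicity_prod_prime_powers[OF assms])

lemma multiplicity_prod_prime_factors_powers: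
  fixes p w :: nat
  assumes "prime p" "p dvd w" "w > 0"
  shows "multiplicity (int p) (int (\<Prod>q\<in>prime_factors w. q ^ f q)) = f p"
  using assms by (subst multiplicity_prod_prime_powers_of_nat) (auto simp: in_prime_factors_iff)

lemma dvd_if_multiplicity_le:
  fixes A B :: int
  assumes "A \<noteq> 0"
    "\<And>p::nat. prime p \<Longrightarrow> B \<noteq> 0 \<Longrightarrow> multiplicity (int p) A \<le> multiplicity (int p) B"
  shows "A dvd B"
proof (cases "B = 0")
  case False
  show ?thesis
  proof (rule multiplicity_le_imp_dvd[OF assms(1)])
    fix q :: int assume q: "prime q"
    hence "q = int (nat q)" "prime (nat q)" using prime_gt_0_int[OF q] by simp_all
    thus "multiplicity q A \<le> multiplicity q B" using assms(2)[of "nat q"] False by metis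
  qed
qed simp

section \<open>Multiples of prime powers in arithmetic progressions\<close>

lemma card_residue_class_bounds:
  fixes q t0 n :: nat
  assumes "q > 0" "t0 < q"
  shows "n div q \<le> card {t. t < n \<and> t mod q = t0}"
    and "card {t. t < n \<and> t mod q = t0} \<le> n div q + 1"
proof -
  let ?I = "{i. t0 + q * i < n}"
  have "{t. t < n \<and> t mod q = t0} = (\<lambda>i. t0 + q * i) ` ?I"
  proof (intro set_eqI iffI)
    fix t assume t: "t \<in> {t. t < n \<and> t mod q = t0}"
    hence "t = t0 + q * (t div q)"
      using div_mult_mod_eq[of t q] by (simp add: mult.commute)
    with t show "t \<in> (\<lambda>i. t0 + q * i) ` ?I" by (intro image_eqI) auto
  next
    fix t assume "t \<in> (\<lambda>i. t0 + q * i) ` ?I"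
    then show "t \<in> {t. t < n \<and> t mod q = t0}" using assms(2) by auto
  qed
  moreover have "inj_on (\<lambda>i. t0 + q * i) ?I"
    using assms(1) by (simp add: inj_on_def)
  ultimately have card_eq: "card {t. t < n \<and> t mod q = t0} = card ?I"
    by (simp add: card_image)
  have "{..<n div q} \<subseteq> ?I"
  proof
    fix i assume "i \<in> {..<n div q}"
    hence "Suc i \<le> n div q" by simp
    hence "q * Suc i \<le> n" using assms(1) by (simp add: less_eq_div_iff_mult_less_eq mult.commute)
    thus "i \<in> ?I" using assms(2) by simp
  qed
  moreover have "?I \<subseteq> {..n div q}"
  proof
    fix i assume "i \<in> ?I"
    hence "i * q \<le> n" by (simp add: mult.commute)
    thus "i \<in> {..n div q}" using assms(1) by (simp add: less_eq_div_iff_mult_less_eq)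
  qed
  moreover have "finite ?I" using \<open>?I \<subseteq> {..n div q}\<close> finite_subset by blast
  ultimately show "n div q \<le> card {t. t < n \<and> t mod q = t0}"
    and "card {t. t < n \<and> t mod q = t0} \<le> n div q + 1"
    unfolding card_eq using card_mono[of ?I "{..<n div q}"] card_mono[of "{..n div q}" ?I] by auto
qed

lemma ap_dvd_iff_mod_eq:
  fixes a s :: int and q :: nat
  assumes "q > 0" "coprime (int q) s"
  obtains t0 where "t0 < q" "\<And>t::nat. (int q dvd a + int t * s) \<longleftrightarrow> t mod q = t0"
proof -
  obtain x where x: "[s * x = 1] (mod int q)" using cong_solve_coprime_int[of s "int q"] assms
    by (auto simp: coprime_commute)
  have cx: "coprime x (int q)"
    using x by (metis cong_imp_coprime cong_sym coprime_1_left coprime_mult_left_iff)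
  define t0 where "t0 = nat ((- a * x) mod int q)"
  have "t0 < q" using assms unfolding t0_def by (simp add: nat_less_iff)
  moreover have "(int q dvd a + int t * s) \<longleftrightarrow> t mod q = t0" for t :: nat
  proof -
    have "(int q dvd a + int t * s) \<longleftrightarrow> int q dvd (a + int t * s) * x"
      using cx by (metis coprime_commute coprime_dvd_mult_left_iff)
    also have "\<dots> \<longleftrightarrow> [(a + int t * s) * x = 0] (mod int q)"
      by (simp add: cong_0_iff)
    also have "[(a + int t * s) * x = a * x + int t] (mod int q)"
    proof -
      have "[(a + int t * s) * x = a * x + int t * (s * x)] (mod int q)"
        by (simp add: algebra_simps)
      moreover have "[a * x + int t * (s * x) = a * x + int t * 1] (mod int q)"
        using x by (intro cong_add cong_mult) auto
      ultimately show ?thesis by (metis cong_trans mult_1_right)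
    qed
    hence "[(a + int t * s) * x = 0] (mod int q) \<longleftrightarrow> [a * x + int t = 0] (mod int q)"
      by (meson cong_sym cong_trans)
    also have "\<dots> \<longleftrightarrow> [int t = - a * x] (mod int q)"
      by (simp add: cong_iff_dvd_diff algebra_simps)
    also have "\<dots> \<longleftrightarrow> int t mod int q = (- a * x) mod int q"
      by (simp add: cong_def)
    also have "\<dots> \<longleftrightarrow> t mod q = t0"
      unfolding t0_def using assms by (auto simp: zmod_int[symmetric])
    finally show ?thesis .
  qed
  ultimately show ?thesis using that by blast
qed

lemma card_ap_dvd_bounds:
  fixes a s :: int and q :: nat
  assumes "q > 0" "coprime (int q) s"
  shows "n div q \<le> card {t. t < n \<and> int q dvd a + int t * s}"
    and "card {t. t < n \<and> int q dvd a + int t * s} \<le> n div q + 1"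
proof -
  obtain t0 where "t0 < q" and iff: "\<And>t::nat. int q dvd a + int t * s \<longleftrightarrow> t mod q = t0"
    using ap_dvd_iff_mod_eq[OF assms, of a] by blast
  show "n div q \<le> card {t. t < n \<and> int q dvd a + int t * s}"
    and "card {t. t < n \<and> int q dvd a + int t * s} \<le> n div q + 1"
    unfolding iff using card_residue_class_bounds[OF assms(1) \<open>t0 < q\<close>] by auto
qed

lemma card_dvd_Suc_le:
  assumes "q > 0"
  shows "card {t. t < n \<and> q dvd Suc t} \<le> n div q"
proof -
  have "{t. t < n \<and> q dvd Suc t} \<subseteq> (\<lambda>c. q * c - 1) ` {1..n div q}"
  proof
    fix t assume t: "t \<in> {t. t < n \<and> q dvd Suc t}"
    then obtain c where c: "Suc t = q * c" by auto
    hence "c \<ge> 1" by (cases c) auto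
    moreover have "c \<le> n div q"
      using t c assms by (simp add: less_eq_div_iff_mult_less_eq mult.commute)
    ultimately show "t \<in> (\<lambda>c. q * c - 1) ` {1..n div q}"
      using c by (intro image_eqI[of _ _ c]) auto
  qed
  hence "card {t. t < n \<and> q dvd Suc t} \<le> card ((\<lambda>c. q * c - 1) ` {1..n div q})"
    by (intro card_mono) auto
  also have "\<dots> \<le> n div q" using card_image_le[of "{1..n div q}"] by simp
  finally show ?thesis .
qed

lemma sum_div_powers_eq_nu:
  fixes p :: nat
  assumes "p \<ge> 2" "n \<le> K"
  shows "(\<Sum>e\<in>{1..K}. n div p ^ e) = nu p n"
proof -
  have "n div p ^ e = 0" if "n < e" for e
  proof -
    have "n < 2 ^ e" using that less_exp[of e] by linarith
    also have "2 ^ e \<le> p ^ e" using assms(1) by (intro power_mono) auto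
    finally show ?thesis by simp
  qed
  hence "(\<Sum>e\<in>{n<..K}. n div p ^ e) = 0" by simp
  moreover have "{1..K} = {1..n} \<union> {n<..K}" using assms(2) by auto
  ultimately show ?thesis by (simp add: nu_def sum.union_disjoint ivl_disj_int)
qed

lemma sum_div_powers_le_nu:
  fixes p :: nat
  assumes "p \<ge> 2"
  shows "(\<Sum>e\<in>{1..K}. n div p ^ e) \<le> nu p n"
proof -
  have "(\<Sum>e\<in>{1..K}. n div p ^ e) \<le> (\<Sum>e\<in>{1..K + n}. n div p ^ e)"
    by (intro sum_mono2) auto
  also have "\<dots> = nu p n" using assms by (intro sum_div_powers_eq_nu) auto
  finally show ?thesis .
qed

lemma nu_mono:
  fixes p :: nat
  assumes "p \<ge> 2" "a \<le> b"
  shows "nu p a \<le> nu p b"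
proof -
  have "nu p a = (\<Sum>e\<in>{1..b}. a div p ^ e)" using assms by (intro sum_div_powers_eq_nu[symmetric])
  also have "\<dots> \<le> (\<Sum>e\<in>{1..b}. b div p ^ e)" using assms(2) by (intro sum_mono div_le_mono)
  also have "\<dots> = nu p b" by (simp add: nu_def)
  finally show ?thesis .
qed

lemma nu_add_le:
  fixes p :: nat
  assumes "p \<ge> 2"
  shows "nu p a + nu p b \<le> nu p (a + b)"
proof -
  have "nu p a + nu p b = (\<Sum>e\<in>{1..a + b}. a div p ^ e + b div p ^ e)"
    using sum_div_powers_eq_nu[OF assms, of a "a + b"] sum_div_powers_eq_nu[OF assms, of b "a + b"]
    by (simp add: sum.distrib)
  also have "\<dots> \<le> (\<Sum>e\<in>{1..a + b}. (a + b) div p ^ e)"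
    using div_add1_eq[of a b] by (intro sum_mono) (metis le_add1)
  also have "\<dots> = nu p (a + b)" by (simp add: nu_def)
  finally show ?thesis .
qed

lemma le_Mp_if_power_le:
  fixes p :: nat
  assumes "prime p" "p ^ e \<le> x"
  shows "e \<le> Mp p x"
proof -
  have p1: "real p > 1" using prime_gt_1_nat[OF assms(1)] by simp
  have "0 < p ^ e" using prime_gt_0_nat[OF assms(1)] by simp
  hence x0: "real x > 0" using assms(2) by linarith
  have "real e * ln (real p) = ln (real (p ^ e))" using p1 by (simp add: ln_realpow)
  also have "\<dots> \<le> ln (real x)"
    using assms(2) x0 \<open>0 < p ^ e\<close> by (simp only: ln_le_cancel_iff of_nat_0_less_iff of_nat_le_iff)
  finally have "real e \<le> ln (real x) / ln (real p)" using p1 by (simp add: pos_le_divide_eq)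
  hence "int e \<le> \<lfloor>ln (real x) / ln (real p)\<rfloor>" by (simp add: le_floor_iff)
  thus ?thesis unfolding Mp_def by simp
qed

lemma Mp_eq_0_if_less:
  fixes p x :: nat
  assumes "x < p"
  shows "Mp p x = 0"
proof (cases "x = 0")
  case False
  have "0 \<le> ln (real x)" "ln (real x) < ln (real p)" using False assms by simp_all
  hence "\<lfloor>ln (real x) / ln (real p)\<rfloor> = 0" by (simp add: floor_eq_iff divide_less_eq)
  thus ?thesis by (simp add: Mp_def)
qed (simp add: Mp_def)

lemma card_powers_le_Mp:
  fixes p :: nat
  assumes "prime p"
  shows "card {e\<in>{1..K}. p ^ e \<le> x} \<le> Mp p x"
proof -
  have "{e\<in>{1..K}. p ^ e \<le> x} \<subseteq> {1..Mp p x}" using le_Mp_if_power_le[OF assms] by auto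
  from card_mono[OF _ this] show ?thesis by simp
qed

lemma multiplicity_prod_Mp:
  fixes p x :: nat
  assumes "prime p" "Q p"
  shows "multiplicity (int p) (int (\<Prod>q\<in>{q. prime q \<and> Q q \<and> q \<le> x}. q ^ Mp q x)) = Mp p x"
  using assms Mp_eq_0_if_less[of x p] by (subst multiplicity_prod_prime_powers_of_nat) auto

section \<open>Valuations of products over arithmetic progressions\<close>

lemma nu_le_multiplicity_prod_ap:
  fixes p :: nat and a s :: int
  assumes "prime p" "\<not> int p dvd s" "(\<Prod>t<n. a + int t * s) \<noteq> 0"
  shows "nu p n \<le> multiplicity (int p) (\<Prod>t<n. a + int t * s)"
proof -
  obtain K where "n \<le> K" and mult: "multiplicity (int p) (\<Prod>t<n. a + int t * s)
      = (\<Sum>e\<in>{1..K}. card {t. t < n \<and> int p ^ e dvd a + int t * s})"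
    using multiplicity_prod_eq_sum_card[of "int p" n "\<lambda>t. a + int t * s"] assms(1,3) by auto
  have "nu p n = (\<Sum>e\<in>{1..K}. n div p ^ e)"
    using \<open>n \<le> K\<close> prime_ge_2_nat[OF assms(1)] by (intro sum_div_powers_eq_nu[symmetric])
  also have "\<dots> \<le> (\<Sum>e\<in>{1..K}. card {t. t < n \<and> int p ^ e dvd a + int t * s})"
  proof (intro sum_mono)
    fix e
    have "coprime (int (p ^ e)) s"
      using assms(1,2) by (simp add: prime_imp_coprime)
    thus "n div p ^ e \<le> card {t. t < n \<and> int p ^ e dvd a + int t * s}"
      using card_ap_dvd_bounds(1)[of "p ^ e" s n a] prime_gt_0_nat[OF assms(1)] by simp
  qed
  finally show ?thesis unfolding mult .
qed

lemma multiplicity_prod_ap_le: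
  fixes p x :: nat and a s :: int
  assumes "prime p" "\<not> int p dvd s"
    and "\<And>t. t < n \<Longrightarrow> 0 < a + int t * s \<and> a + int t * s \<le> int x"
  shows "multiplicity (int p) (\<Prod>t<n. a + int t * s) \<le> nu p n + Mp p x"
proof -
  obtain K where mult: "multiplicity (int p) (\<Prod>t<n. a + int t * s)
      = (\<Sum>e\<in>{1..K}. card {t. t < n \<and> int p ^ e dvd a + int t * s})"
    using multiplicity_prod_eq_sum_card[of "int p" n "\<lambda>t. a + int t * s"] assms(1,3)
    by (metis less_irrefl prime_nat_int_transfer)
  have "card {t. t < n \<and> int p ^ e dvd a + int t * s} \<le> n div p ^ e + of_bool (p ^ e \<le> x)" for e
  proof (cases "p ^ e \<le> x")
    case True
    have "coprime (int (p ^ e)) s"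
      using assms(1,2) by (simp add: prime_imp_coprime)
    thus ?thesis
      using card_ap_dvd_bounds(2)[of "p ^ e" s n a] prime_gt_0_nat[OF assms(1)] True by simp
  next
    case False
    have "\<not> int p ^ e dvd a + int t * s" if "t < n" for t
    proof
      assume "int p ^ e dvd a + int t * s"
      hence "int p ^ e \<le> int x" using assms(3)[OF that] by (meson zdvd_imp_le order_trans)
      with False show False by (metis of_nat_le_iff of_nat_power)
    qed
    hence "{t. t < n \<and> int p ^ e dvd a + int t * s} = {}" by blast
    thus ?thesis by (metis card.empty zero_le)
  qed
  hence "multiplicity (int p) (\<Prod>t<n. a + int t * s)
      \<le> (\<Sum>e\<in>{1..K}. n div p ^ e + of_bool (p ^ e \<le> x))"
    unfolding mult by (intro sum_mono)
  also have "\<dots> = (\<Sum>e\<in>{1..K}. n div p ^ e) + card {e\<in>{1..K}. p ^ e \<le> x}"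
    by (simp add: sum.distrib Int_def)
  also have "\<dots> \<le> nu p n + Mp p x"
    using sum_div_powers_le_nu[OF prime_ge_2_nat[OF assms(1)]] card_powers_le_Mp[OF assms(1)]
    by (intro add_mono)
  finally show ?thesis .
qed

lemma multiplicity_fact_le_nu:
  fixes p :: nat
  assumes "prime p"
  shows "multiplicity (int p) (fact n :: int) \<le> nu p n"
proof -
  have "(fact n :: int) = (\<Prod>t<n. int (Suc t))"
    by (induction n) (simp_all add: algebra_simps)
  moreover obtain K where "multiplicity (int p) (\<Prod>t<n. int (Suc t))
      = (\<Sum>e\<in>{1..K}. card {t. t < n \<and> int p ^ e dvd int (Suc t)})"
    using multiplicity_prod_eq_sum_card[of "int p" n "\<lambda>t. int (Suc t)"] assms by auto
  moreover have "card {t. t < n \<and> int p ^ e dvd int (Suc t)} \<le> n div p ^ e" for e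
    using card_dvd_Suc_le[of "p ^ e" n] prime_gt_0_nat[OF assms]
    by (simp only: of_nat_power[symmetric] of_nat_dvd_iff) simp
  ultimately have "multiplicity (int p) (fact n :: int) \<le> (\<Sum>e\<in>{1..K}. n div p ^ e)"
    by (simp add: sum_mono)
  also have "\<dots> \<le> nu p n" using sum_div_powers_le_nu[OF prime_ge_2_nat[OF assms]] .
  finally show ?thesis .
qed

lemma multiplicity_prod_ap_eq_0:
  fixes p :: nat and a s :: int
  assumes "prime p" "int p dvd s" "\<not> int p dvd a"
  shows "multiplicity (int p) (\<Prod>t<n. a + int t * s) = 0"
proof (rule not_dvd_imp_multiplicity_0)
  show "\<not> int p dvd (\<Prod>t<n. a + int t * s)"
  proof
    assume "int p dvd (\<Prod>t<n. a + int t * s)"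
    then obtain t where "int p dvd a + int t * s"
      using prime_dvd_prod_iff[of "{..<n}" "int p"] assms(1) by auto
    with assms(2,3) show False by (simp add: dvd_add_left_iff)
  qed
qed

section \<open>Denominators of Pochhammer quotients\<close>

lemma pochhammer_of_int_div:
  fixes a :: int and s :: nat
  assumes "s > 0"
  shows "pochhammer (of_int a / of_nat s :: rat) b = of_int (\<Prod>t<b. a + int t * int s) / of_nat s ^ b"
proof -
  have "pochhammer (of_int a / of_nat s :: rat) b = (\<Prod>t<b. of_int (a + int t * int s) / of_nat s)"
    unfolding pochhammer_prod using assms by (intro prod.cong) (auto simp: field_simps)
  thus ?thesis by (simp add: prod_dividef)
qed

lemma Ints_of_nat_mult_dvd:
  assumes "(a::nat) dvd b" "of_nat a * (x::rat) \<in> \<int>"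
  shows "of_nat b * x \<in> \<int>"
proof -
  obtain k where "b = a * k" using assms(1) by blast
  hence "of_nat b * x = of_nat k * (of_nat a * x)" by simp
  also have "\<dots> \<in> \<int>" by (rule Ints_mult[OF Ints_of_nat assms(2)])
  finally show ?thesis .
qed

definition poch_fact_denom :: "nat \<Rightarrow> nat \<Rightarrow> nat" where
  "poch_fact_denom s b = s ^ b * (\<Prod>p\<in>prime_factors s. p ^ nu p b)"

lemma fact_dvd_prod_ap:
  fixes a :: int and s :: nat
  assumes "s > 0"
  shows "(fact b :: int) dvd (\<Prod>t<b. a + int t * int s) * int (\<Prod>p\<in>prime_factors s. p ^ nu p b)"
proof (rule dvd_if_multiplicity_le)
  fix p :: nat
  define P where "P = (\<Prod>t<b. a + int t * int s)"
  define C where "C = (\<Prod>p\<in>prime_factors s. p ^ nu p b)"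
  assume p: "prime p" and nz: "P * int C \<noteq> 0"
  have "multiplicity (int p) (P * int C) = multiplicity (int p) P + multiplicity (int p) (int C)"
    using p nz by (intro prime_elem_multiplicity_mult_distrib) auto
  moreover have "nu p b \<le> multiplicity (int p) P + multiplicity (int p) (int C)"
  proof (cases "p dvd s")
    case True
    have "multiplicity (int p) (int C) = nu p b"
      unfolding C_def using p True assms
      by (rule multiplicity_prod_prime_factors_powers[where f = "\<lambda>p. nu p b"])
    thus ?thesis by simp
  next
    case False
    have "P \<noteq> 0" using nz by simp
    with False p have "nu p b \<le> multiplicity (int p) P"
      unfolding P_def by (intro nu_le_multiplicity_prod_ap) simp_all
    thus ?thesis by simp
  qed
  ultimately show "multiplicity (int p) (fact b :: int) \<le> multiplicity (int p) (P * int C)"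
    using multiplicity_fact_le_nu[OF p, of b] by linarith
qed simp

lemma poch_fact_denom_pochhammer_Ints:
  fixes a :: int and s :: nat
  assumes "s > 0"
  shows "of_nat (poch_fact_denom s b) * (pochhammer (of_int a / of_nat s :: rat) b / fact b) \<in> \<int>"
proof -
  define P where "P = (\<Prod>t<b. a + int t * int s)"
  define C where "C = (\<Prod>p\<in>prime_factors s. p ^ nu p b)"
  have "of_nat (poch_fact_denom s b) * (pochhammer (of_int a / of_nat s :: rat) b / fact b)
      = of_int (P * int C) / of_int (fact b)"
    using assms by (simp add: poch_fact_denom_def pochhammer_of_int_div P_def C_def field_simps)
  also have "\<dots> \<in> \<int>"
    using fact_dvd_prod_ap[OF assms, of b a] by (intro of_int_divide_in_Ints) (simp add: P_def C_def)
  finally show ?thesis .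
qed

lemma poch_fact_denom_mult_dvd:
  assumes "b1 + b2 \<le> M"
  shows "poch_fact_denom s b1 * poch_fact_denom s b2 dvd poch_fact_denom s M"
proof -
  have "(\<Prod>p\<in>prime_factors s. p ^ nu p b1) * (\<Prod>p\<in>prime_factors s. p ^ nu p b2)
      = (\<Prod>p\<in>prime_factors s. p ^ (nu p b1 + nu p b2))"
    by (simp add: prod.distrib power_add)
  also have "\<dots> dvd (\<Prod>p\<in>prime_factors s. p ^ nu p M)"
  proof (rule prod_dvd_prod)
    fix p assume "p \<in> prime_factors s"
    hence p2: "p \<ge> 2" by (simp add: in_prime_factors_iff prime_ge_2_nat)
    have "nu p b1 + nu p b2 \<le> nu p M"
      using nu_add_le[OF p2, of b1 b2] nu_mono[OF p2 assms] by linarith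
    thus "p ^ (nu p b1 + nu p b2) dvd p ^ nu p M" by (rule le_imp_power_dvd)
  qed
  moreover have "s ^ b1 * s ^ b2 dvd s ^ M"
    using assms by (simp add: le_imp_power_dvd flip: power_add)
  ultimately show ?thesis
    unfolding poch_fact_denom_def by (metis mult_dvd_mono mult.assoc mult.left_commute)
qed

lemma prod_ap_dvd:
  fixes a b :: int and s v w K x :: nat and Q :: "nat \<Rightarrow> bool"
  assumes "coprime a (int s)"
    and "\<And>t. t < L \<Longrightarrow> 0 < a + int t * int s \<and> a + int t * int s \<le> int x"
    and "v dvd w" "w > 0" "L \<le> K"
    and "\<And>p. prime p \<Longrightarrow> \<not> p dvd s \<Longrightarrow> Q p"
  shows "(\<Prod>t<L. a + int t * int s) dvd (\<Prod>t<L. b + int t * int v)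
           * int (\<Prod>p\<in>prime_factors w. p ^ nu p K)
           * int (\<Prod>p\<in>{p. prime p \<and> Q p \<and> p \<le> x}. p ^ Mp p x)"
proof (rule dvd_if_multiplicity_le)
  define A where "A = (\<Prod>t<L. a + int t * int s)"
  define B where "B = (\<Prod>t<L. b + int t * int v)"
  define F1 where "F1 = (\<Prod>p\<in>prime_factors w. p ^ nu p K)"
  define F2 where "F2 = (\<Prod>p\<in>{p. prime p \<and> Q p \<and> p \<le> x}. p ^ Mp p x)"
  show "A \<noteq> 0" using assms(2) by (fastforce simp: A_def)
  fix p :: nat
  assume p: "prime p" and nz: "B * int F1 * int F2 \<noteq> 0"
  show "multiplicity (int p) A \<le> multiplicity (int p) (B * int F1 * int F2)"
  proof (cases "p dvd s")
    case True
    have "\<not> int p dvd a"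
      using True assms(1) p by (metis coprime_common_divisor int_dvd_int_iff not_prime_unit
          prime_nat_int_transfer)
    thus ?thesis using True p by (simp add: A_def multiplicity_prod_ap_eq_0)
  next
    case False
    have "multiplicity (int p) A \<le> nu p L + Mp p x"
      using False p assms(2) by (simp add: A_def multiplicity_prod_ap_le)
    moreover have "nu p L \<le> multiplicity (int p) B + multiplicity (int p) (int F1)"
    proof (cases "p dvd v")
      case True
      hence "multiplicity (int p) (int F1) = nu p K"
        unfolding F1_def using p dvd_trans assms(3,4) by (intro multiplicity_prod_prime_factors_powers)
      thus ?thesis using nu_mono[OF prime_ge_2_nat[OF p] assms(5)] by simp
    next
      case False
      have "B \<noteq> 0" using nz by simp
      with False p have "nu p L \<le> multiplicity (int p) B"
        unfolding B_def by (intro nu_le_multiplicity_prod_ap) simp_all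
      thus ?thesis by simp
    qed
    moreover have "multiplicity (int p) (int F2) = Mp p x"
      unfolding F2_def using p assms(6)[OF p False] by (rule multiplicity_prod_Mp)
    moreover have "multiplicity (int p) (B * int F1 * int F2)
        = multiplicity (int p) B + multiplicity (int p) (int F1) + multiplicity (int p) (int F2)"
      using p nz by (simp add: prime_elem_multiplicity_mult_distrib)
    ultimately show ?thesis by linarith
  qed
qed

lemma pochhammer_ratio_Ints:
  fixes a b :: int and s v c w K x :: nat and Q :: "nat \<Rightarrow> bool"
  assumes "coprime a (int s)"
    and "\<And>t. t < L \<Longrightarrow> 0 < a + int t * int s \<and> a + int t * int s \<le> int x"
    and "v dvd w" "w > 0" "L \<le> K"
    and "\<And>p. prime p \<Longrightarrow> \<not> p dvd s \<Longrightarrow> Q p"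
    and "s > 0" "v > 0" "v dvd c * s"
  shows "of_nat (c ^ L * (\<Prod>p\<in>prime_factors w. p ^ nu p K)
           * (\<Prod>p\<in>{p. prime p \<and> Q p \<and> p \<le> x}. p ^ Mp p x))
         * (pochhammer (of_int b / of_nat v :: rat) L / pochhammer (of_int a / of_nat s) L) \<in> \<int>"
proof -
  define A where "A = (\<Prod>t<L. a + int t * int s)"
  define B where "B = (\<Prod>t<L. b + int t * int v)"
  define F where "F = (\<Prod>p\<in>prime_factors w. p ^ nu p K)
           * (\<Prod>p\<in>{p. prime p \<and> Q p \<and> p \<le> x}. p ^ Mp p x)"
  obtain y where y: "c * s = v * y" using assms(9) by blast
  have "A \<noteq> 0" using assms(2) by (fastforce simp: A_def)
  have "of_nat (c ^ L * F) * (pochhammer (of_int b / of_nat v :: rat) L / pochhammer (of_int a / of_nat s) L)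
      = of_nat F * of_int B * (of_nat c * of_nat s) ^ L / (of_nat v ^ L * of_int A)"
    using assms(7,8) \<open>A \<noteq> 0\<close>
    by (simp add: pochhammer_of_int_div A_def B_def field_simps power_mult_distrib)
  also have "(of_nat c * of_nat s :: rat) = of_nat v * of_nat y"
    using y by (metis of_nat_mult)
  also have "of_nat F * of_int B * (of_nat v * of_nat y) ^ L / (of_nat v ^ L * of_int A)
      = (of_int (B * int F * int y ^ L) / of_int A :: rat)"
    using assms(8) \<open>A \<noteq> 0\<close> by (simp add: field_simps power_mult_distrib)
  also have "\<dots> \<in> \<int>"
  proof (rule of_int_divide_in_Ints, rule dvd_mult2)
    show "A dvd B * int F"
      using prod_ap_dvd[where b=b and Q=Q, OF assms(1-6)] by (simp add: A_def B_def F_def mult.assoc)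
  qed
  finally show ?thesis by (simp add: F_def mult.assoc)
qed

lemma numr_denr:
  assumes "q > (0::rat)"
  shows "q = of_nat (numr q) / of_nat (denr q)" "numr q > 0" "denr q > 0"
    "coprime (numr q) (denr q)"
proof -
  obtain a b where ab: "quotient_of q = (a, b)" by (cases "quotient_of q") auto
  have b0: "b > 0" and cp: "coprime a b" and q: "q = of_int a / of_int b"
    using quotient_of_denom_pos[OF ab] quotient_of_coprime[OF ab] quotient_of_div[OF ab] by simp_all
  have a0: "a > 0"
    using assms b0 unfolding q by (simp add: zero_less_divide_iff)
  have n: "numr q = nat a" and d: "denr q = nat b" unfolding numr_def denr_def ab by simp_all
  show "q = of_nat (numr q) / of_nat (denr q)" "numr q > 0" "denr q > 0"
    using a0 b0 q unfolding n d by simp_all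
  show "coprime (numr q) (denr q)"
    using cp a0 b0 unfolding n d by (metis coprime_int_iff int_nat_eq order_less_le)
qed

lemma numr_denr_add_of_nat:
  assumes "q > (0::rat)"
  shows "q + of_nat e = of_int (int (numr q + e * denr q)) / of_nat (denr q)"
  using numr_denr(1,3)[OF assms] by (simp add: field_simps)

lemma denr_dvd_denominator:
  fixes a b :: int
  assumes "b > 0" "q = of_int a / of_int b"
  shows "int (denr q) dvd b"
proof -
  obtain a' b' where ab: "quotient_of q = (a', b')" by (cases "quotient_of q") auto
  have b0: "b' > 0" and cp: "coprime a' b'" and q: "q = of_int a' / of_int b'"
    using quotient_of_denom_pos[OF ab] quotient_of_coprime[OF ab] quotient_of_div[OF ab] by simp_all
  have "of_int (a' * b) = (of_int (a * b') :: rat)"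
    using assms q b0 by (simp add: field_simps)
  hence "b' dvd a' * b" by (metis dvd_triv_right of_int_eq_iff)
  hence "b' dvd b" using cp by (simp add: coprime_commute coprime_dvd_mult_right_iff)
  thus ?thesis using b0 by (simp add: denr_def ab)
qed

lemma denr_mult_denr_eq_dj:
  assumes "\<alpha> 0 > 0" "\<alpha> j > 0"
  shows "denr (\<alpha> 0) * denr (\<alpha> j) = dj \<alpha> j * denr (\<alpha> j + \<alpha> 0)"
proof -
  define s0 s where "s0 = denr (\<alpha> 0)" and "s = denr (\<alpha> j)"
  have sum: "\<alpha> j + \<alpha> 0
      = of_int (int (numr (\<alpha> j)) * int s0 + int (numr (\<alpha> 0)) * int s) / of_int (int (s0 * s))"
    using numr_denr[OF assms(1)] numr_denr[OF assms(2)] unfolding s0_def s_def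
    by (simp add: field_simps)
  have "int (s0 * s) > 0" using numr_denr(3)[OF assms(1)] numr_denr(3)[OF assms(2)]
    by (simp add: s0_def s_def)
  from denr_dvd_denominator[OF this sum] have "int (denr (\<alpha> j + \<alpha> 0)) dvd int (s0 * s)" .
  thus ?thesis unfolding dj_def s0_def s_def by (simp only: of_nat_dvd_iff dvd_div_mult_self)
qed

lemma dvd_div_gcd_mult:
  fixes d s0 e s v :: nat
  assumes "s0 * s = e * v" "e dvd d" "s0 > 0"
  shows "s dvd (d div gcd d s0) * v"
proof -
  define g where "g = gcd d s0"
  obtain w where w: "d = e * w" using assms(2) by blast
  have "g > 0" using assms(3) by (simp add: g_def)
  have "(d div g) * v * g = (w * (s0 div g) * s) * g"
    using w assms(1) by (simp add: g_def algebra_simps)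
  hence "(d div g) * v = w * (s0 div g) * s" using \<open>g > 0\<close> by simp
  thus ?thesis by (simp add: g_def)
qed

section \<open>The denominators D1 and D2\<close>

definition D1_factor :: "(nat \<Rightarrow> rat) \<Rightarrow> (nat \<Rightarrow> nat) \<Rightarrow> nat \<Rightarrow> nat" where
  "D1_factor \<alpha> n j =
     (\<Prod>p\<in>prime_factors (denr (\<alpha> j + \<alpha> 0)). p ^ nu p (n j))
     * (let x = numr (\<alpha> j) + (n 0 + 1) * denr (\<alpha> j) in
        \<Prod>p\<in>{p. prime p \<and> \<not> p dvd denr (\<alpha> j) \<and> p \<le> x}. p ^ Mp p x)"

definition acoef_ratio :: "(nat \<Rightarrow> rat) \<Rightarrow> (nat \<Rightarrow> nat) \<Rightarrow> nat \<Rightarrow> nat \<Rightarrow> nat \<Rightarrow> rat" where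
  "acoef_ratio \<alpha> n i j l =
     pochhammer (\<alpha> j + \<alpha> 0 + of_nat (n 0) - of_nat (n j) + kdelta i j + of_nat l + 1) (n j)
     / pochhammer (\<alpha> j + of_nat (n 0) - of_nat (n j) + kdelta i j + 1) (n j)"

lemma D1_factor_acoef_ratio_Ints:
  assumes "\<alpha> 0 > 0" "\<alpha> j > 0" "n j \<le> n 0"
  shows "of_nat (denr (\<alpha> 0) ^ n j * D1_factor \<alpha> n j) * acoef_ratio \<alpha> n i j l \<in> \<int>"
proof -
  define r s u v where "r = numr (\<alpha> j)" and "s = denr (\<alpha> j)"
    and "u = numr (\<alpha> j + \<alpha> 0)" and "v = denr (\<alpha> j + \<alpha> 0)"
  have "\<alpha> j + \<alpha> 0 > 0" using assms(1,2) by simp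
  note rs = numr_denr[OF assms(2), folded r_def s_def]
    and uv = numr_denr[OF this, folded u_def v_def]
  define e where "e = n 0 - n j + (if i = j then 1 else 0) + 1"
  have shift: "of_nat (n 0) - of_nat (n j) + kdelta i j + 1 = (of_nat e :: rat)"
    using assms(3) by (simp add: e_def kdelta_def of_nat_diff)
  have num: "\<alpha> j + \<alpha> 0 + of_nat (n 0) - of_nat (n j) + kdelta i j + of_nat l + 1
      = of_int (int (u + (e + l) * v)) / of_nat v"
    using numr_denr_add_of_nat[OF \<open>\<alpha> j + \<alpha> 0 > 0\<close>, of "e + l"] shift
    by (simp add: u_def v_def algebra_simps)
  have den: "\<alpha> j + of_nat (n 0) - of_nat (n j) + kdelta i j + 1 = of_int (int (r + e * s)) / of_nat s"
    using numr_denr_add_of_nat[OF assms(2), of e] shift by (simp add: r_def s_def algebra_simps)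
  have "gcd (r + e * s) s = gcd s r"
    using gcd_add_mult[of s e r] by (simp add: gcd.commute add.commute)
  hence "coprime (r + e * s) s"
    using rs(4) by (simp add: coprime_iff_gcd_eq_1 gcd.commute)
  hence "coprime (int (r + e * s)) (int s)" by (simp only: coprime_int_iff)
  moreover have "0 < int (r + e * s) + int t * int s \<and>
      int (r + e * s) + int t * int s \<le> int (r + (n 0 + 1) * s)" if "t < n j" for t
  proof -
    have "e + t \<le> n 0 + 1" using that assms(3) unfolding e_def by (cases "i = j") auto
    hence "r + (e + t) * s \<le> r + (n 0 + 1) * s" by (intro add_left_mono mult_right_mono) simp_all
    moreover have "int (r + e * s) + int t * int s = int (r + (e + t) * s)" by (simp add: algebra_simps)
    ultimately show ?thesis using rs(2) by (simp only: of_nat_le_iff of_nat_0_less_iff) simp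
  qed
  moreover have "v dvd denr (\<alpha> 0) * s"
    using denr_mult_denr_eq_dj[OF assms(1,2)] by (simp add: s_def v_def)
  ultimately have "of_nat (denr (\<alpha> 0) ^ n j * (\<Prod>p\<in>prime_factors v. p ^ nu p (n j))
        * (\<Prod>p\<in>{p. prime p \<and> \<not> p dvd s \<and> p \<le> r + (n 0 + 1) * s}.
             p ^ Mp p (r + (n 0 + 1) * s)))
      * (pochhammer (of_int (int (u + (e + l) * v)) / of_nat v :: rat) (n j)
         / pochhammer (of_int (int (r + e * s)) / of_nat s) (n j)) \<in> \<int>"
    using rs(3) uv(3) by (intro pochhammer_ratio_Ints) auto
  thus ?thesis
    by (simp add: D1_factor_def acoef_ratio_def Let_def num den r_def s_def u_def v_def mult.assoc)
qed

lemma D1_prod_acoef_ratio_Ints: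
  assumes "\<forall>j\<le>m. \<alpha> j > 0" "\<forall>j\<in>{1..m}. n j \<le> n 0"
  shows "of_nat (denr (\<alpha> 0) ^ NN m n * (\<Prod>j=1..m. D1_factor \<alpha> n j))
           * (\<Prod>j=1..m. acoef_ratio \<alpha> n i j l) \<in> \<int>"
proof -
  have "denr (\<alpha> 0) ^ NN m n = (\<Prod>j=1..m. denr (\<alpha> 0) ^ n j)"
    by (simp add: NN_def power_sum)
  hence "of_nat (denr (\<alpha> 0) ^ NN m n * (\<Prod>j=1..m. D1_factor \<alpha> n j))
           * (\<Prod>j=1..m. acoef_ratio \<alpha> n i j l)
      = (\<Prod>j=1..m. of_nat (denr (\<alpha> 0) ^ n j * D1_factor \<alpha> n j) * acoef_ratio \<alpha> n i j l)"
    by (simp add: prod.distrib)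
  also have "\<dots> \<in> \<int>"
    using assms by (intro Ints_prod D1_factor_acoef_ratio_Ints) auto
  finally show ?thesis .
qed

lemma poch_fact_denom_pochhammer_pair_Ints:
  fixes a1 a2 :: int
  assumes "s > 0" "b1 + b2 \<le> M"
  shows "of_nat (poch_fact_denom s M) * (pochhammer (of_int a1 / of_nat s :: rat) b1 / fact b1
           * (pochhammer (of_int a2 / of_nat s) b2 / fact b2)) \<in> \<int>"
proof (rule Ints_of_nat_mult_dvd[OF poch_fact_denom_mult_dvd[OF assms(2)]])
  show "of_nat (poch_fact_denom s b1 * poch_fact_denom s b2)
      * (pochhammer (of_int a1 / of_nat s :: rat) b1 / fact b1
         * (pochhammer (of_int a2 / of_nat s) b2 / fact b2)) \<in> \<int>"
    using Ints_mult[OF poch_fact_denom_pochhammer_Ints[OF assms(1), of b1 a1]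
        poch_fact_denom_pochhammer_Ints[OF assms(1), of b2 a2]]
    by (simp add: mult_ac)
qed

lemma NN_pos:
  assumes "m \<ge> 1" "\<forall>j\<in>{1..m}. n j > 0"
  shows "NN m n > 0"
proof -
  have "0 < n 1" "n 1 \<le> NN m n"
    using assms by (auto simp: NN_def intro: member_le_sum)
  thus ?thesis by linarith
qed

lemma D1_eq:
  assumes "NN m n > 0"
  shows "D1 m \<alpha> n = poch_fact_denom (denr (\<alpha> 0)) (NN m n - 1)
           * (denr (\<alpha> 0) ^ NN m n * (\<Prod>j=1..m. D1_factor \<alpha> n j))"
proof -
  have "denr (\<alpha> 0) ^ (2 * NN m n - 1) = denr (\<alpha> 0) ^ (NN m n - 1) * denr (\<alpha> 0) ^ NN m n"
  proof -
    have "2 * NN m n - 1 = (NN m n - 1) + NN m n" using assms by simp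
    thus ?thesis by (simp only: power_add)
  qed
  thus ?thesis
    by (simp add: D1_def D1_factor_def poch_fact_denom_def Let_def mult_ac)
qed

lemma acoef_eq_sum:
  assumes "k < NN m n"
  shows "acoef m \<alpha> n i k = (\<Sum>l = NN m n - k - 1..NN m n - 1. (-1) ^ (l + 1)
      * (pochhammer (\<alpha> 0 - 1) (l - (NN m n - k - 1)) / fact (l - (NN m n - k - 1))
         * (pochhammer (\<alpha> 0 + of_nat l + 1) (NN m n - l - 1) / fact (NN m n - l - 1)))
      * (\<Prod>j=1..m. acoef_ratio \<alpha> n i j l))"
  using assms by (simp add: acoef_def acoef_ratio_def Let_def mult.assoc)

lemma D1_acoef_Ints:
  assumes "m \<ge> 1" "\<forall>j\<le>m. \<alpha> j > 0"
    and "\<forall>j\<in>{1..m}. n j > 0" "\<forall>j\<in>{1..m}. n j \<le> n 0" "k \<le> NN m n"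
  shows "of_nat (D1 m \<alpha> n) * acoef m \<alpha> n i k \<in> \<int>"
proof (cases "k = NN m n")
  case True
  thus ?thesis by (simp add: acoef_def)
next
  case False
  define N s0 r0 where "N = NN m n" and "s0 = denr (\<alpha> 0)" and "r0 = numr (\<alpha> 0)"
  have "N > 0" using NN_pos[OF assms(1,3)] by (simp add: N_def)
  have "\<alpha> 0 > 0" using assms(2) by simp
  note r0s0 = numr_denr[OF this, folded r0_def s0_def]
  have "of_nat (D1 m \<alpha> n) * ((-1) ^ (l + 1)
      * (pochhammer (\<alpha> 0 - 1) b1 / fact b1 * (pochhammer (\<alpha> 0 + of_nat l + 1) b2 / fact b2))
      * (\<Prod>j=1..m. acoef_ratio \<alpha> n i j l)) \<in> \<int>" if "b1 + b2 \<le> N - 1" for l b1 b2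
  proof -
    have args: "\<alpha> 0 - 1 = of_int (int r0 - int s0) / of_nat s0"
      "\<alpha> 0 + of_nat l + 1 = of_int (int (r0 + (l + 1) * s0)) / of_nat s0"
      using r0s0(1,3) by (simp_all add: field_simps)
    have c1: "of_nat (poch_fact_denom s0 (N - 1))
        * (pochhammer (\<alpha> 0 - 1) b1 / fact b1
           * (pochhammer (\<alpha> 0 + of_nat l + 1) b2 / fact b2)) \<in> \<int>"
      unfolding args by (rule poch_fact_denom_pochhammer_pair_Ints[OF r0s0(3) that])
    have c2: "of_nat (s0 ^ N * (\<Prod>j=1..m. D1_factor \<alpha> n j))
        * (\<Prod>j=1..m. acoef_ratio \<alpha> n i j l) \<in> \<int>"
      using D1_prod_acoef_ratio_Ints[OF assms(2,4)] by (simp add: N_def s0_def)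
    have "(-1) ^ (l + 1) * ((of_nat (poch_fact_denom s0 (N - 1))
        * (pochhammer (\<alpha> 0 - 1) b1 / fact b1 * (pochhammer (\<alpha> 0 + of_nat l + 1) b2 / fact b2)))
        * (of_nat (s0 ^ N * (\<Prod>j=1..m. D1_factor \<alpha> n j))
           * (\<Prod>j=1..m. acoef_ratio \<alpha> n i j l))) \<in> \<int>"
      by (rule Ints_mult[OF Ints_power[OF Ints_minus[OF Ints_1]] Ints_mult[OF c1 c2]])
    thus ?thesis
      using D1_eq[of m n \<alpha>] \<open>N > 0\<close> by (simp add: N_def s0_def mult_ac)
  qed
  moreover have "(l - (N - k - 1)) + (N - l - 1) \<le> N - 1" if "l \<le> N - 1" for l
    using that by linarith
  ultimately show ?thesis
    using False assms(5)
    by (auto simp: acoef_eq_sum sum_distrib_left N_def intro!: Ints_sum)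
qed

lemma Lcm_denr_neq_0:
  fixes \<alpha> :: "nat \<Rightarrow> rat" and m :: nat
  assumes "\<forall>j\<le>m. \<alpha> j > 0"
  shows "Lcm ((\<lambda>j. denr (\<alpha> j)) ` {1..m}) \<noteq> 0"
proof -
  have "denr (\<alpha> j) \<noteq> 0" if "j \<in> {1..m}" for j
    using assms numr_denr(3)[of "\<alpha> j"] that by simp
  hence "0 \<notin> (\<lambda>j. denr (\<alpha> j)) ` {1..m}" by (metis imageE)
  thus ?thesis by simp
qed

lemma D2_pochhammer_ratio_Ints:
  assumes "\<forall>j\<le>m. \<alpha> j > 0" "j \<in> {1..m}" "L \<le> Ntil m n"
  shows "of_nat (D2 m \<alpha> n) * (pochhammer (\<alpha> j) L / pochhammer (\<alpha> j + \<alpha> 0) L) \<in> \<int>"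
proof -
  define Nt S d U V where "Nt = Ntil m n" and "S = Lcm ((\<lambda>j. denr (\<alpha> j)) ` {1..m})"
    and "d = Lcm ((\<lambda>j. dj \<alpha> j) ` {1..m})"
    and "U = Max ((\<lambda>j. numr (\<alpha> j + \<alpha> 0)) ` {1..m})"
    and "V = Max ((\<lambda>j. denr (\<alpha> j + \<alpha> 0)) ` {1..m})"
  define c F where "c = d div gcd d (denr (\<alpha> 0))"
    and "F = (\<Prod>p\<in>prime_factors S. p ^ nu p Nt)
             * (\<Prod>p\<in>{p. prime p \<and> p \<le> U + V * Nt}. p ^ Mp p (U + V * Nt))"
  define r s u v where "r = numr (\<alpha> j)" and "s = denr (\<alpha> j)"
    and "u = numr (\<alpha> j + \<alpha> 0)" and "v = denr (\<alpha> j + \<alpha> 0)"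
  have "\<alpha> 0 > 0" "\<alpha> j > 0" using assms(1,2) by auto
  hence "\<alpha> j + \<alpha> 0 > 0" by simp
  note rs = numr_denr[OF \<open>\<alpha> j > 0\<close>, folded r_def s_def]
    and uv = numr_denr[OF \<open>\<alpha> j + \<alpha> 0 > 0\<close>, folded u_def v_def]
  have "S \<noteq> 0" using Lcm_denr_neq_0[OF assms(1)] by (simp add: S_def)
  have "u \<le> U" "v \<le> V" using assms(2) by (auto simp: U_def V_def u_def v_def intro!: Max_ge)
  have terms: "0 < int u + int t * int v \<and> int u + int t * int v \<le> int (U + V * Nt)" if "t < L" for t
  proof -
    have "t * v \<le> Nt * V" using that assms(3) \<open>v \<le> V\<close> by (intro mult_mono) (simp_all add: Nt_def)
    hence "u + t * v \<le> U + V * Nt" using \<open>u \<le> U\<close> by (simp add: mult.commute)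
    thus ?thesis using uv(2)
      by (simp only: of_nat_mult[symmetric] of_nat_add[symmetric] of_nat_le_iff of_nat_0_less_iff) simp
  qed
  have "s dvd S" "dj \<alpha> j dvd d"
    using assms(2) unfolding S_def d_def s_def by (auto intro: dvd_Lcm)
  have "s dvd c * v"
    using dvd_div_gcd_mult[OF denr_mult_denr_eq_dj[OF \<open>\<alpha> 0 > 0\<close> \<open>\<alpha> j > 0\<close>] \<open>dj \<alpha> j dvd d\<close>]
      numr_denr(3)[OF \<open>\<alpha> 0 > 0\<close>] by (simp add: c_def s_def v_def)
  have "coprime (int u) (int v)" using uv(4) by (simp only: coprime_int_iff)
  from pochhammer_ratio_Ints[where Q = "\<lambda>_. True" and L = L and K = Nt and b = "int r",
      OF this terms \<open>s dvd S\<close> _ _ _ uv(3) rs(3) \<open>s dvd c * v\<close>]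
  have "of_nat (c ^ L * F) * (pochhammer (of_int (int r) / of_nat s :: rat) L
      / pochhammer (of_int (int u) / of_nat v) L) \<in> \<int>"
    using \<open>S \<noteq> 0\<close> assms(3) unfolding F_def Nt_def by (simp add: mult.assoc)
  moreover have "of_int (int r) / of_nat s = \<alpha> j" "of_int (int u) / of_nat v = \<alpha> j + \<alpha> 0"
    using rs(1) uv(1) by simp_all
  moreover have "c ^ L * F dvd c ^ Nt * F"
    using assms(3) by (intro mult_dvd_mono le_imp_power_dvd) (simp_all add: Nt_def)
  ultimately have "of_nat (c ^ Nt * F) * (pochhammer (\<alpha> j) L / pochhammer (\<alpha> j + \<alpha> 0) L) \<in> \<int>"
    by (metis Ints_of_nat_mult_dvd)
  thus ?thesis
    by (simp add: D2_def Let_def Nt_def S_def d_def U_def V_def c_def F_def mult.assoc)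
qed

theorem lemma4:
  fixes m :: nat and \<alpha> :: "nat \<Rightarrow> rat" and n :: "nat \<Rightarrow> nat"
  assumes "m \<ge> 1"
    and "\<forall>j\<le>m. \<alpha> j > 0"
    and "\<forall>i j. 1 \<le> i \<and> i < j \<and> j \<le> m \<longrightarrow> \<alpha> i - \<alpha> j \<notin> \<int>"
    and "\<forall>j\<in>{1..m}. n j > 0"
    and "\<forall>j\<in>{1..m}. n j \<le> n 0"
  shows "(\<forall>i\<le>m. \<forall>k\<le>NN m n. of_nat (DD m \<alpha> n) * acoef m \<alpha> n i k \<in> \<int>)
       \<and> (\<forall>i\<le>m. \<forall>j\<in>{1..m}. \<forall>\<mu>\<le>Ntil m n - n j + (if i = j then 1 else 0).
            of_nat (DD m \<alpha> n) * ccoef m \<alpha> n i j \<mu> \<in> \<int>)"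
proof (intro conjI allI impI ballI)
  have D1_acoef: "of_nat (D1 m \<alpha> n) * acoef m \<alpha> n i k \<in> \<int>" if "k \<le> NN m n" for i k
    using D1_acoef_Ints[OF assms(1,2,4,5) that] .
  fix i
  show "of_nat (DD m \<alpha> n) * acoef m \<alpha> n i k \<in> \<int>" if "k \<le> NN m n" for k
    using Ints_mult[OF Ints_of_nat[of "D2 m \<alpha> n"] D1_acoef[OF that, of i]]
    by (simp add: DD_def mult_ac)
  fix j \<mu> assume j: "j \<in> {1..m}" and \<mu>: "\<mu> \<le> Ntil m n - n j + (if i = j then 1 else 0)"
  have "n j \<le> NN m n" unfolding NN_def using j by (intro member_le_sum) auto
  hence "0 < n j" "n j \<le> Ntil m n" using j assms(4) by (auto simp: Ntil_def)
  hence "\<mu> \<le> Ntil m n" using \<mu> by (auto split: if_splits)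
  hence D2_ratio: "of_nat (D2 m \<alpha> n)
      * (pochhammer (\<alpha> j) (\<mu> - k) / pochhammer (\<alpha> j + \<alpha> 0) (\<mu> - k)) \<in> \<int>" for k
    by (intro D2_pochhammer_ratio_Ints[OF assms(2) j]) simp
  have "(\<Sum>k=0..min (NN m n) \<mu>. (of_nat (D1 m \<alpha> n) * acoef m \<alpha> n i k)
      * (of_nat (D2 m \<alpha> n) * (pochhammer (\<alpha> j) (\<mu> - k) / pochhammer (\<alpha> j + \<alpha> 0) (\<mu> - k)))) \<in> \<int>"
    using D1_acoef D2_ratio by (intro Ints_sum Ints_mult[OF D1_acoef D2_ratio]) simp
  thus "of_nat (DD m \<alpha> n) * ccoef m \<alpha> n i j \<mu> \<in> \<int>"
    by (simp add: ccoef_def DD_def sum_distrib_left mult_ac)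
qed

end
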